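(* Let $P$ be a finite graded poset with $\hat0,\hat1$. (1) If $x,y\in P-\{\hat0,\hat1\}$ with $x$ covering $y$, and $x',y'$ denote the new elements of $\mathcal U(P;x,y)$, then $\mathcal Z(\mathcal U(P;x,y);x',y',y)=P$. (2) If $x,y,z\in P-\{\hat0,\hat1\}$ satisfy the zipping hypotheses, then $\mathcal O(\mathcal Z(P;x,y,z))$ is obtained from $\mathcal O(P)$ by first contracting $y$ to $x$ and then contracting $x$ to $z$. (3) If $x$ covers $y$, then $\mathcal O(\mathcal U(P;x,y))$ is obtained from $\mathcal O(P)$ by first performing the edge subdivision of $\{x,y\}$ with new vertex $x'$, and then the edge subdivision of $\{x,x'\}$ with new vertex $y'$.
   Context: $\mathcal O(P)$ denotes the simplicial complex of chains of $P-\{\hat0,\hat1\}$; $r$ is the rank function. Zipping: let $x,y,z\in P-\{\hat0,\hat1\}$ be such that (i) $x$ covers exactly $y$ and $z$, (ii) $x$ is the unique minimal upper bound of $y$ and $z$, (iii) $y$ and $z$ cover exactly the same elements; $\mathcal Z(P;x,y,z)$ is the poset obtained from $P$ by deleting $x,y$ and adding the relations $w>z$ for all relations $w>y$. Unzipping: for $x,y\in P-\{\hat0,\hat1\}$ with $x$ covering $y$, $\mathcal U(P;x,y)$ is the graded poset obtained by deleting the cover relation $y<x$, adding new elements $x',y'$ with $r(x')=r(x)$, $r(y')=r(y)$, and adding the cover relations $x'<w$ for every cover $x<w$, $w<y'$ for every cover $w<y$, and $y'<x'$, $y<x'$, $y'<x$. For a simplicial complex $\Delta$ with edge $\{i,j\}$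 and $\mathrm{lk}_\Delta(F)=\{G: G\cap F=\emptyset, G\cup F\in\Delta\}$: the edge subdivision of $\{i,j\}$ by a new vertex $v$ is $\{F\in\Delta:F\not\supseteq\{i,j\}\}\cup\{F\cup\{v\},F\cup\{i,v\},F\cup\{j,v\}:F\in\mathrm{lk}_\Delta(\{i,j\})\}$; the edge contraction of $i$ to $j$ is $\{F\in\Delta:i\notin F\}\cup\{(F\setminus\{i\})\cup\{j\}: i\in F\in\Delta\}$. *)

theory Defs
  imports Main
begin

text \<open>A poset is a pair (carrier, order relation), the relation being the
  reflexive order \<le> as a set of pairs (a,b) meaning a \<le> b.\<close>
type_synonym 'a poset = "'a set \<times> ('a \<times> 'a) set"

definition is_poset :: "'a poset \<Rightarrow> bool" where
  "is_poset P \<longleftrightarrow> snd P \<subseteq> fst P \<times> fst P \<and> refl_on (fst P) (snd P)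
     \<and> antisym (snd P) \<and> trans (snd P)"

definition covers :: "'a poset \<Rightarrow> 'a \<Rightarrow> 'a \<Rightarrow> bool" where
  "covers P a c \<longleftrightarrow> (c, a) \<in> snd P \<and> a \<noteq> c \<and>
     (\<forall>w. (c, w) \<in> snd P \<and> (w, a) \<in> snd P \<longrightarrow> w = c \<or> w = a)"

text \<open>Finite graded poset with least element bt (\<open>\<hat>0\<close>) and greatest element tp (\<open>\<hat>1\<close>).\<close>
definition graded_bounded_poset :: "'a poset \<Rightarrow> 'a \<Rightarrow> 'a \<Rightarrow> bool" where
  "graded_bounded_poset P bt tp \<longleftrightarrow> finite (fst P) \<and> is_poset P \<and>
     bt \<in> fst P \<and> tp \<in> fst P \<and> (\<forall>a\<in>fst P. (bt, a) \<in> snd P \<and> (a, tp) \<in> snd P) \<and>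
     (\<exists>r :: 'a \<Rightarrow> nat. r bt = 0 \<and>
        (\<forall>a\<in>fst P. \<forall>c\<in>fst P. covers P a c \<longrightarrow> r a = r c + 1))"

text \<open>Order complex: chains of P - {bt, tp} (including the empty face).\<close>
definition order_complex :: "'a poset \<Rightarrow> 'a \<Rightarrow> 'a \<Rightarrow> 'a set set" where
  "order_complex P bt tp = {F. F \<subseteq> fst P - {bt, tp} \<and>
     (\<forall>u\<in>F. \<forall>v\<in>F. (u, v) \<in> snd P \<or> (v, u) \<in> snd P)}"

definition zip_hyp :: "'a poset \<Rightarrow> 'a \<Rightarrow> 'a \<Rightarrow> 'a \<Rightarrow> bool" where
  "zip_hyp P x y z \<longleftrightarrow>
     y \<noteq> z \<and> {w \<in> fst P. covers P x w} = {y, z} \<and>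
     {w \<in> fst P. (y, w) \<in> snd P \<and> (z, w) \<in> snd P \<and>
        (\<forall>v\<in>fst P. (y, v) \<in> snd P \<and> (z, v) \<in> snd P \<and> (v, w) \<in> snd P \<longrightarrow> v = w)} = {x} \<and>
     {w \<in> fst P. covers P y w} = {w \<in> fst P. covers P z w}"

definition zip_poset :: "'a poset \<Rightarrow> 'a \<Rightarrow> 'a \<Rightarrow> 'a \<Rightarrow> 'a poset" where
  "zip_poset P x y z = (fst P - {x, y},
     {(a, c). a \<in> fst P - {x, y} \<and> c \<in> fst P - {x, y} \<and>
        ((a, c) \<in> snd P \<or> (a = z \<and> (y, c) \<in> snd P \<and> c \<noteq> y))})"

definition cover_pairs :: "'a poset \<Rightarrow> ('a \<times> 'a) set" where
  "cover_pairs P = {(c, a). c \<in> fst P \<and> a \<in> fst P \<and> covers P a c}"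

text \<open>Unzipping U(P;x,y) with new elements x', y' (given by the caller, assumed fresh):
  the poset generated by the modified cover relation.\<close>
definition unzip :: "'a poset \<Rightarrow> 'a \<Rightarrow> 'a \<Rightarrow> 'a \<Rightarrow> 'a \<Rightarrow> 'a poset" where
  "unzip P x y x' y' =
    (let S' = fst P \<union> {x', y'};
         C' = (cover_pairs P - {(y, x)})
              \<union> {(x', w) | w. (x, w) \<in> cover_pairs P}
              \<union> {(w, y') | w. (w, y) \<in> cover_pairs P}
              \<union> {(y', x'), (y, x'), (y', x)}
     in (S', Id_on S' \<union> C'\<^sup>+))"

definition link :: "'a set set \<Rightarrow> 'a set \<Rightarrow> 'a set set" where
  "link D F = {G. G \<inter> F = {} \<and> G \<union> F \<in> D}"

definition edge_subdiv :: "'a set set \<Rightarrow> 'a \<Rightarrow> 'a \<Rightarrow> 'a \<Rightarrow> 'a set set" where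
  "edge_subdiv D i j v = {F \<in> D. \<not> {i, j} \<subseteq> F}
     \<union> {F \<union> {v} | F. F \<in> link D {i, j}}
     \<union> {F \<union> {i, v} | F. F \<in> link D {i, j}}
     \<union> {F \<union> {j, v} | F. F \<in> link D {i, j}}"

definition edge_contract :: "'a set set \<Rightarrow> 'a \<Rightarrow> 'a \<Rightarrow> 'a set set" where
  "edge_contract D i j = {F \<in> D. i \<notin> F} \<union> {(F - {i}) \<union> {j} | F. i \<in> F \<and> F \<in> D}"

end

theory Submission
  imports Defs
begin

(*
  In a finite poset the strict order is the transitive closure of the cover
     relation; hence below every strictly smaller element there is a lower cover.  This turns
     the cover conditions of the zipping hypotheses into statements about the full order.
  2. Complexes.  A chain of Z(P;x,y,z) is a chain of P avoiding x and y,
     or becomes one when z is replaced by y; conversely contracting x and y of a chain of P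
     to z gives a chain of the zipped poset.  The order of U(P;x,y), defined as the transitive
     closure of a cover relation, is described explicitly.  Part (1) is read off from this
     description, and the resulting comparabilities identify the chains of U(P;x,y) with the
     faces of the double subdivision, which is part (3).
*)

lemma poset_le:
  assumes "is_poset P"
  shows poset_le_carrier: "(a,b) \<in> snd P \<Longrightarrow> a \<in> fst P \<and> b \<in> fst P"
    and poset_le_refl: "a \<in> fst P \<Longrightarrow> (a,a) \<in> snd P"
    and poset_le_trans: "(a,b) \<in> snd P \<Longrightarrow> (b,c) \<in> snd P \<Longrightarrow> (a,c) \<in> snd P"
    and poset_le_antisym: "(a,b) \<in> snd P \<Longrightarrow> (b,a) \<in> snd P \<Longrightarrow> a = b"
  using assms unfolding is_poset_def refl_on_def trans_def antisym_def by blast+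

lemma cover_pairs_less: "(a,c) \<in> cover_pairs P \<Longrightarrow> (a,c) \<in> snd P \<and> a \<noteq> c"
  unfolding cover_pairs_def covers_def by auto

lemma trancl_cover_pairs_less:
  assumes "is_poset P" "(a,c) \<in> (cover_pairs P)\<^sup>+"
  shows "(a,c) \<in> snd P \<and> a \<noteq> c"
  using assms(2)
proof (induction rule: trancl_induct)
  case (base c)
  then show ?case by (rule cover_pairs_less)
next
  case (step b c)
  then have "(b,c) \<in> snd P" "b \<noteq> c" using cover_pairs_less[OF step(2)] by auto
  then show ?case
    using step.IH poset_le_trans[OF assms(1)] poset_le_antisym[OF assms(1)] by metis
qed

lemma less_trancl_cover_pairs:
  assumes fin: "finite (fst P)" and po: "is_poset P"
  shows "(a,c) \<in> snd P \<Longrightarrow> a \<noteq> c \<Longrightarrow> (a,c) \<in> (cover_pairs P)\<^sup>+"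
proof (induction "card {w \<in> fst P. (a,w) \<in> snd P \<and> (w,c) \<in> snd P}" arbitrary: a c
    rule: less_induct)
  case (less a c)
  let ?I = "\<lambda>a c. {w \<in> fst P. (a,w) \<in> snd P \<and> (w,c) \<in> snd P}"
  have ac: "a \<in> fst P" "c \<in> fst P" using poset_le_carrier[OF po less(2)] by auto
  show ?case
  proof (cases "covers P c a")
    case True
    then show ?thesis using ac by (auto simp: cover_pairs_def)
  next
    case False
    then obtain w where w: "(a,w) \<in> snd P" "(w,c) \<in> snd P" "w \<noteq> a" "w \<noteq> c"
      using less(2,3) unfolding covers_def by blast
    note le = poset_le_trans[OF po] poset_le_antisym[OF po] poset_le_refl[OF po]
    have fin_I: "finite (?I a c)" using fin by simp
    have "?I a w \<subseteq> ?I a c" "c \<in> ?I a c - ?I a w"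
      using w ac less(2) le by blast+
    then have "card (?I a w) < card (?I a c)" using fin_I by (intro psubset_card_mono) blast+
    then have "(a,w) \<in> (cover_pairs P)\<^sup>+" using less(1) w by blast
    moreover have "?I w c \<subseteq> ?I a c" "a \<in> ?I a c - ?I w c"
      using w ac less(2) le by blast+
    then have "card (?I w c) < card (?I a c)" using fin_I by (intro psubset_card_mono) blast+
    then have "(w,c) \<in> (cover_pairs P)\<^sup>+" using less(1) w by blast
    ultimately show ?thesis by (rule trancl_trans)
  qed
qed

lemma below_some_lower_cover:
  assumes fin: "finite (fst P)" and po: "is_poset P" and "(w,c) \<in> snd P" "w \<noteq> c"
  obtains d where "covers P c d" "(w,d) \<in> snd P"
proof -
  obtain d where wd: "(w,d) \<in> (cover_pairs P)\<^sup>*" and dc: "(d,c) \<in> cover_pairs P"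
    using tranclD2[OF less_trancl_cover_pairs[OF fin po assms(3,4)]] by blast
  have "d \<in> fst P" "covers P c d" using dc unfolding cover_pairs_def by auto
  moreover have "(w,d) \<in> snd P"
    using wd poset_le_refl[OF po] trancl_cover_pairs_less[OF po] \<open>d \<in> fst P\<close>
    by (auto simp: rtrancl_eq_or_trancl)
  ultimately show ?thesis using that by blast
qed

lemma below_of_same_lower_covers:
  assumes fin: "finite (fst P)" and po: "is_poset P"
    and covers_ab: "\<And>d. d \<in> fst P \<Longrightarrow> covers P a d \<Longrightarrow> covers P b d"
    and "(w,a) \<in> snd P" "w \<noteq> a"
  shows "(w,b) \<in> snd P"
proof -
  obtain d where "covers P a d" "(w,d) \<in> snd P"
    using below_some_lower_cover[OF fin po assms(4,5)] .
  moreover from this have "covers P b d"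
    using covers_ab poset_le_carrier[OF po] unfolding covers_def by blast
  ultimately show ?thesis using poset_le_trans[OF po] unfolding covers_def by blast
qed

definition comparable :: "('a \<times> 'a) set \<Rightarrow> 'a \<Rightarrow> 'a \<Rightarrow> bool" where
  "comparable R u v \<longleftrightarrow> (u,v) \<in> R \<or> (v,u) \<in> R"

definition is_chain_in :: "('a \<times> 'a) set \<Rightarrow> 'a set \<Rightarrow> bool" where
  "is_chain_in R F \<longleftrightarrow> (\<forall>u\<in>F. \<forall>v\<in>F. comparable R u v)"

lemma comparable_sym: "comparable R u v = comparable R v u"
  unfolding comparable_def by blast

lemma is_chain_in_insert:
  "is_chain_in R (insert a F) \<longleftrightarrow>
     (a,a) \<in> R \<and> (\<forall>v\<in>F. comparable R a v) \<and> is_chain_in R F"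
  unfolding is_chain_in_def comparable_def by blast

lemma is_chain_in_Un:
  assumes "is_chain_in R G" "is_chain_in R S" "\<And>a v. a \<in> S \<Longrightarrow> v \<in> G \<Longrightarrow> comparable R a v"
  shows "is_chain_in R (G \<union> S)"
  using assms unfolding is_chain_in_def comparable_def by blast

lemma order_complex_iff:
  "F \<in> order_complex P bt tp \<longleftrightarrow> F \<subseteq> fst P - {bt,tp} \<and> is_chain_in (snd P) F"
  unfolding order_complex_def is_chain_in_def comparable_def by simp

lemma order_complex_faces: "F \<in> order_complex P bt tp \<Longrightarrow> F \<subseteq> fst P"
  unfolding order_complex_iff by blast

lemma edge_contract_iff:
  "F \<in> edge_contract D i j \<longleftrightarrow> (F \<in> D \<and> i \<notin> F) \<or> (\<exists>H\<in>D. i \<in> H \<and> F = H - {i} \<union> {j})"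
  unfolding edge_contract_def by blast

lemma edge_contract_twice:
  "F \<in> edge_contract (edge_contract D y x) x z \<longleftrightarrow>
     (F \<in> D \<and> x \<notin> F \<and> y \<notin> F) \<or> (\<exists>H\<in>D. (x \<in> H \<or> y \<in> H) \<and> F = H - {x,y} \<union> {z})"
proof
  assume "F \<in> edge_contract (edge_contract D y x) x z"
  then consider "F \<in> edge_contract D y x" "x \<notin> F"
    | K where "K \<in> edge_contract D y x" "x \<in> K" "F = K - {x} \<union> {z}"
    unfolding edge_contract_iff[of F] by blast
  then show "(F \<in> D \<and> x \<notin> F \<and> y \<notin> F) \<or> (\<exists>H\<in>D. (x \<in> H \<or> y \<in> H) \<and> F = H - {x,y} \<union> {z})"
  proof cases
    case 1
    then show ?thesis unfolding edge_contract_iff by blast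
  next
    case (2 K)
    from \<open>K \<in> edge_contract D y x\<close> show ?thesis
    proof (unfold edge_contract_iff, elim disjE bexE conjE)
      assume "K \<in> D" "y \<notin> K"
      then show ?thesis using 2 by blast
    next
      fix H assume "H \<in> D" "y \<in> H" "K = H - {y} \<union> {x}"
      then show ?thesis using 2 by blast
    qed
  qed
next
  assume "(F \<in> D \<and> x \<notin> F \<and> y \<notin> F) \<or> (\<exists>H\<in>D. (x \<in> H \<or> y \<in> H) \<and> F = H - {x,y} \<union> {z})"
  then show "F \<in> edge_contract (edge_contract D y x) x z"
  proof
    assume "F \<in> D \<and> x \<notin> F \<and> y \<notin> F"
    then show ?thesis unfolding edge_contract_iff by blast
  next
    assume "\<exists>H\<in>D. (x \<in> H \<or> y \<in> H) \<and> F = H - {x,y} \<union> {z}"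
    then obtain H where H: "H \<in> D" "x \<in> H \<or> y \<in> H" "F = H - {x,y} \<union> {z}" by blast
    define K where "K = (if y \<in> H then H - {y} \<union> {x} else H)"
    have "K \<in> edge_contract D y x"
    proof (cases "y \<in> H")
      case True
      then show ?thesis
        using H(1) unfolding K_def edge_contract_iff by (intro disjI2 bexI[of _ H]) auto
    next
      case False
      then show ?thesis using H(1) unfolding K_def edge_contract_iff by simp
    qed
    moreover have "x \<in> K" "F = K - {x} \<union> {z}"
      using H unfolding K_def by auto
    ultimately show ?thesis unfolding edge_contract_iff[of F] by blast
  qed
qed

lemma edge_subdiv_iff:
  "F \<in> edge_subdiv D i j v \<longleftrightarrow> (F \<in> D \<and> \<not> {i,j} \<subseteq> F) \<or>
     (\<exists>G\<in>link D {i,j}. F = G \<union> {v} \<or> F = G \<union> {i,v} \<or> F = G \<union> {j,v})"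
  unfolding edge_subdiv_def by blast

lemma link_edge_subset:
  assumes "\<And>F. F \<in> D \<Longrightarrow> F \<subseteq> V" "G \<in> link D {i,j}"
  shows "G \<subseteq> V - {i,j}"
  using assms unfolding link_def by blast

lemma link_edge_subdiv:
  assumes faces: "\<And>F. F \<in> D \<Longrightarrow> F \<subseteq> V" and "i \<in> V" "i \<noteq> j" "v \<notin> V"
  shows "link (edge_subdiv D i j v) {i,v} = link D {i,j}"
proof (rule set_eqI)
  fix G
  have link_sub: "F \<subseteq> V - {i,j}" if "F \<in> link D {i,j}" for F
    using link_edge_subset[OF faces that] .
  show "G \<in> link (edge_subdiv D i j v) {i,v} \<longleftrightarrow> G \<in> link D {i,j}"
  proof
    assume G: "G \<in> link (edge_subdiv D i j v) {i,v}"
    then have disj: "G \<inter> {i,v} = {}" unfolding link_def by blast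
    from G consider "G \<union> {i,v} \<in> D"
      | F where "F \<in> link D {i,j}" "G \<union> {i,v} = F \<union> {v} \<or> G \<union> {i,v} = F \<union> {j,v}"
      | F where "F \<in> link D {i,j}" "G \<union> {i,v} = F \<union> {i,v}"
      unfolding link_def[of _ "{i,v}"] edge_subdiv_iff by blast
    then show "G \<in> link D {i,j}"
    proof cases
      case 1
      then show ?thesis using faces \<open>v \<notin> V\<close> by blast
    next
      case (2 F)
      then show ?thesis using link_sub \<open>i \<in> V\<close> \<open>i \<noteq> j\<close> \<open>v \<notin> V\<close> by blast
    next
      case (3 F)
      then have "G = F" using disj link_sub[of F] \<open>v \<notin> V\<close> by blast
      then show ?thesis using 3 by simp
    qed
  next
    assume G: "G \<in> link D {i,j}"
    then have "G \<inter> {i,v} = {}" using link_sub \<open>v \<notin> V\<close> by blast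
    then show "G \<in> link (edge_subdiv D i j v) {i,v}"
      using G unfolding link_def[of _ "{i,v}"] edge_subdiv_iff by blast
  qed
qed

lemma edge_subdiv_twice:
  assumes faces: "\<And>F. F \<in> D \<Longrightarrow> F \<subseteq> V" and "i \<in> V" "j \<in> V" "i \<noteq> j" "v \<notin> V"
  shows "F \<in> edge_subdiv (edge_subdiv D i j v) i v w \<longleftrightarrow> (F \<in> D \<and> \<not> {i,j} \<subseteq> F) \<or>
     (\<exists>G\<in>link D {i,j}. F = G \<union> {v} \<or> F = G \<union> {j,v} \<or>
        F = G \<union> {w} \<or> F = G \<union> {i,w} \<or> F = G \<union> {v,w})"
proof -
  have link_sub: "G \<subseteq> V - {i,j}" if "G \<in> link D {i,j}" for G
    using link_edge_subset[OF faces that] .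
  have without_new_edge: "F \<in> edge_subdiv D i j v \<and> \<not> {i,v} \<subseteq> F \<longleftrightarrow> (F \<in> D \<and> \<not> {i,j} \<subseteq> F) \<or>
     (\<exists>G\<in>link D {i,j}. F = G \<union> {v} \<or> F = G \<union> {j,v})"
  proof
    assume "F \<in> edge_subdiv D i j v \<and> \<not> {i,v} \<subseteq> F"
    then show "(F \<in> D \<and> \<not> {i,j} \<subseteq> F) \<or> (\<exists>G\<in>link D {i,j}. F = G \<union> {v} \<or> F = G \<union> {j,v})"
      unfolding edge_subdiv_iff by blast
  next
    have "i \<noteq> v" using \<open>i \<in> V\<close> \<open>v \<notin> V\<close> by blast
    assume "(F \<in> D \<and> \<not> {i,j} \<subseteq> F) \<or> (\<exists>G\<in>link D {i,j}. F = G \<union> {v} \<or> F = G \<union> {j,v})"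
    moreover have "v \<notin> F" if "F \<in> D" using faces[OF that] \<open>v \<notin> V\<close> by blast
    moreover have "i \<notin> G \<union> {v}" "i \<notin> G \<union> {j,v}" if "G \<in> link D {i,j}" for G
      using link_sub[OF that] \<open>i \<noteq> j\<close> \<open>i \<noteq> v\<close> by blast+
    ultimately show "F \<in> edge_subdiv D i j v \<and> \<not> {i,v} \<subseteq> F"
      unfolding edge_subdiv_iff by blast
  qed
  show ?thesis
    unfolding edge_subdiv_iff[of F "edge_subdiv D i j v"] without_new_edge bex_disj_distrib
    by (simp only: link_edge_subdiv[OF assms(1,2,4,5)] disj_assoc)
qed

locale zip_setting =
  fixes P :: "'a poset" and x y z :: 'a
  assumes poset: "is_poset P" and finite: "finite (fst P)" and hyp: "zip_hyp P x y z"
begin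

text \<open>Consequences of the hypotheses: \<open>x\<close> covers exactly \<open>y\<close> and \<open>z\<close>, which have the same lower
  covers.\<close>

lemma zip_elements: "y \<in> fst P" "z \<in> fst P" "y \<noteq> z" "z \<noteq> x" "(z,x) \<in> snd P"
  using hyp unfolding zip_hyp_def covers_def by (auto simp: set_eq_iff)

lemma lower_covers_x: "w \<in> fst P \<Longrightarrow> covers P x w \<Longrightarrow> w = y \<or> w = z"
  using hyp unfolding zip_hyp_def by (auto simp: set_eq_iff)

lemma lower_covers_y_z: "w \<in> fst P \<Longrightarrow> covers P y w \<longleftrightarrow> covers P z w"
  using hyp unfolding zip_hyp_def by (auto simp: set_eq_iff)

lemma below_x: assumes "(w,x) \<in> snd P" "w \<noteq> x" shows "(w,y) \<in> snd P \<or> (w,z) \<in> snd P"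
proof -
  obtain d where "covers P x d" "(w,d) \<in> snd P"
    using below_some_lower_cover[OF finite poset assms] .
  moreover from this have "d \<in> fst P"
    using poset_le_carrier[OF poset] unfolding covers_def by blast
  ultimately show ?thesis using lower_covers_x by blast
qed

lemma below_y_below_z: "(w,y) \<in> snd P \<Longrightarrow> w \<noteq> y \<Longrightarrow> (w,z) \<in> snd P"
  using below_of_same_lower_covers[OF finite poset] lower_covers_y_z by blast

lemma below_z_below_y: "(w,z) \<in> snd P \<Longrightarrow> w \<noteq> z \<Longrightarrow> (w,y) \<in> snd P"
  using below_of_same_lower_covers[OF finite poset] lower_covers_y_z by blast

definition zip_rel :: "('a \<times> 'a) set" where
  "zip_rel = {(u,v). (u,v) \<in> snd P \<or> (u = z \<and> (y,v) \<in> snd P \<and> v \<noteq> y)}"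

lemma order_complex_zip:
  "F \<in> order_complex (zip_poset P x y z) bt tp \<longleftrightarrow>
     F \<subseteq> fst P - {x,y} - {bt,tp} \<and> is_chain_in zip_rel F"
  unfolding order_complex_iff zip_poset_def zip_rel_def is_chain_in_def comparable_def
  by auto

lemma zip_chain_cases:
  assumes F: "F \<subseteq> fst P - {x,y}" "is_chain_in zip_rel F"
  shows "is_chain_in (snd P) F \<or> (z \<in> F \<and> is_chain_in (snd P) (insert y (F - {z})))"
proof (cases "is_chain_in (snd P) F")
  case not_chain: False
  have comp: "comparable zip_rel u v" if "u \<in> F" "v \<in> F" for u v
    using F(2) that unfolding is_chain_in_def by blast
  have comp_P: "comparable (snd P) u v" if "u \<in> F" "v \<in> F" "u \<noteq> z" "v \<noteq> z" for u v
    using comp[OF that(1,2)] that(3,4) unfolding comparable_def zip_rel_def by blast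
  \<comment> \<open>an element of \<open>F\<close> incomparable with \<open>z\<close> in \<open>P\<close> forces \<open>z \<in> F\<close> and lies above \<open>y\<close>\<close>
  obtain b where "z \<in> F" "b \<in> F" and b_z: "\<not> comparable (snd P) z b"
    using not_chain comp_P unfolding is_chain_in_def by (metis comparable_sym)
  then have y_b: "(y,b) \<in> snd P"
    using comp[of z b] unfolding comparable_def zip_rel_def by auto
  have y_w: "comparable (snd P) y w" if "w \<in> F" "w \<noteq> z" for w
  proof -
    have "(z,w) \<in> snd P \<or> (w,z) \<in> snd P \<or> (y,w) \<in> snd P"
      using comp[OF \<open>z \<in> F\<close> that(1)] that(2) unfolding comparable_def zip_rel_def by blast
    moreover have "(y,w) \<in> snd P" if "(z,w) \<in> snd P"
    proof -
      have "comparable (snd P) b w"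
        using comp_P[OF \<open>b \<in> F\<close> \<open>w \<in> F\<close>] b_z \<open>w \<noteq> z\<close> poset_le_refl[OF poset] zip_elements(2)
        unfolding comparable_def by blast
      then show ?thesis
        using that b_z y_b poset_le_trans[OF poset] unfolding comparable_def by blast
    qed
    ultimately show ?thesis using below_z_below_y \<open>w \<noteq> z\<close> unfolding comparable_def by blast
  qed
  have "is_chain_in (snd P) (F - {z})"
    using comp_P unfolding is_chain_in_def by blast
  then show ?thesis
    using \<open>z \<in> F\<close> y_w poset_le_refl[OF poset] zip_elements(1)
    unfolding is_chain_in_insert by blast
qed simp

lemma zip_chain_of_contraction:
  assumes H: "is_chain_in (snd P) H" "x \<in> H \<or> y \<in> H"
  shows "is_chain_in zip_rel (insert z (H - {x,y}))"
proof -
  have z_w: "comparable zip_rel z w" if "w \<in> H" "w \<noteq> x" "w \<noteq> y" for w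
  proof -
    have "comparable (snd P) w x" if "x \<in> H"
      using H(1) \<open>w \<in> H\<close> that unfolding is_chain_in_def by blast
    moreover have "comparable (snd P) w y" if "y \<in> H"
      using H(1) \<open>w \<in> H\<close> that unfolding is_chain_in_def by blast
    moreover have "(w,z) \<in> snd P" if "(w,y) \<in> snd P"
      using below_y_below_z that \<open>w \<noteq> y\<close> .
    moreover have "(z,w) \<in> snd P" if "(x,w) \<in> snd P"
      using poset_le_trans[OF poset zip_elements(5) that] .
    ultimately show ?thesis
      using H(2) below_x \<open>w \<noteq> x\<close> \<open>w \<noteq> y\<close> unfolding comparable_def zip_rel_def by blast
  qed
  have "is_chain_in zip_rel (H - {x,y})"
    using H(1) unfolding is_chain_in_def comparable_def zip_rel_def by blast
  moreover have "(z,z) \<in> zip_rel"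
    using poset_le_refl[OF poset zip_elements(2)] unfolding zip_rel_def by blast
  ultimately show ?thesis
    unfolding is_chain_in_insert using z_w by blast
qed

lemma zip_chain_is_contraction_face:
  assumes "y \<notin> {bt,tp}"
    and F_sub: "F \<subseteq> fst P - {x,y} - {bt,tp}" and F_chain: "is_chain_in zip_rel F"
  shows "(F \<in> order_complex P bt tp \<and> x \<notin> F \<and> y \<notin> F) \<or>
    (\<exists>H\<in>order_complex P bt tp. (x \<in> H \<or> y \<in> H) \<and> F = H - {x,y} \<union> {z})"
proof (cases "is_chain_in (snd P) F")
  case True
  then show ?thesis using F_sub unfolding order_complex_iff by blast
next
  case False
  moreover have "F \<subseteq> fst P - {x,y}" using F_sub by blast
  ultimately have "z \<in> F" and H_chain: "is_chain_in (snd P) (insert y (F - {z}))"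
    using zip_chain_cases F_chain by blast+
  define H where "H = insert y (F - {z})"
  have "H \<subseteq> fst P - {bt,tp}"
    using F_sub zip_elements(1) assms(1) unfolding H_def by blast
  then have "H \<in> order_complex P bt tp" using H_chain unfolding H_def order_complex_iff by blast
  moreover have "y \<in> H" "F = H - {x,y} \<union> {z}"
    using F_sub \<open>z \<in> F\<close> zip_elements(3,4) unfolding H_def by blast+
  ultimately show ?thesis by blast
qed

lemma contraction_face_is_zip_chain:
  assumes "z \<notin> {bt,tp}" and H: "H \<in> order_complex P bt tp" "x \<in> H \<or> y \<in> H"
  shows "H - {x,y} \<union> {z} \<subseteq> fst P - {x,y} - {bt,tp} \<and> is_chain_in zip_rel (H - {x,y} \<union> {z})"
proof
  show "H - {x,y} \<union> {z} \<subseteq> fst P - {x,y} - {bt,tp}"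
    using H(1) zip_elements(2-4) assms(1) unfolding order_complex_iff by blast
  show "is_chain_in zip_rel (H - {x,y} \<union> {z})"
    using zip_chain_of_contraction H unfolding order_complex_iff by simp
qed

theorem order_complex_zip_poset:
  assumes "x \<notin> {bt,tp}" "y \<notin> {bt,tp}" "z \<notin> {bt,tp}"
  shows "order_complex (zip_poset P x y z) bt tp =
    edge_contract (edge_contract (order_complex P bt tp) y x) x z"
proof (rule set_eqI)
  fix F
  let ?O = "order_complex P bt tp"
  show "F \<in> order_complex (zip_poset P x y z) bt tp \<longleftrightarrow> F \<in> edge_contract (edge_contract ?O y x) x z"
    unfolding edge_contract_twice order_complex_zip
  proof
    assume "F \<subseteq> fst P - {x,y} - {bt,tp} \<and> is_chain_in zip_rel F"
    then show "(F \<in> ?O \<and> x \<notin> F \<and> y \<notin> F) \<or> (\<exists>H\<in>?O. (x \<in> H \<or> y \<in> H) \<and> F = H - {x,y} \<union> {z})"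
      by (elim conjE) (rule zip_chain_is_contraction_face[OF assms(2)])
  next
    assume "(F \<in> ?O \<and> x \<notin> F \<and> y \<notin> F) \<or> (\<exists>H\<in>?O. (x \<in> H \<or> y \<in> H) \<and> F = H - {x,y} \<union> {z})"
    then show "F \<subseteq> fst P - {x,y} - {bt,tp} \<and> is_chain_in zip_rel F"
    proof
      assume "F \<in> ?O \<and> x \<notin> F \<and> y \<notin> F"
      then show ?thesis
        unfolding order_complex_iff is_chain_in_def comparable_def zip_rel_def by blast
    next
      assume "\<exists>H\<in>?O. (x \<in> H \<or> y \<in> H) \<and> F = H - {x,y} \<union> {z}"
      then obtain H where "H \<in> ?O" "x \<in> H \<or> y \<in> H" and F_eq: "F = H - {x,y} \<union> {z}"
        by blast
      then show ?thesis using contraction_face_is_zip_chain[OF assms(3)] by simp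
    qed
  qed
qed

end

locale unzip_setting =
  fixes P :: "'a poset" and x y x' y' :: 'a
  assumes poset: "is_poset P" and finite: "finite (fst P)" and x_covers_y: "covers P x y"
    and fresh: "x' \<notin> fst P" "y' \<notin> fst P" "x' \<noteq> y'"
begin

abbreviation unzipped :: "'a poset" where
  "unzipped \<equiv> unzip P x y x' y'"

lemma cover_elements: "x \<in> fst P" "y \<in> fst P" "(y,x) \<in> snd P" "x \<noteq> y" "(x,y) \<notin> snd P"
  "\<And>w. (y,w) \<in> snd P \<Longrightarrow> (w,x) \<in> snd P \<Longrightarrow> w = y \<or> w = x"
  using x_covers_y poset_le_carrier[OF poset] poset_le_antisym[OF poset]
  unfolding covers_def by blast+

text \<open>The generating cover relation of the unzipped poset, and its intended strict order:
  \<open>P\<close> without the relation \<open>y < x\<close>, with \<open>x'\<close> placed above the down-set of \<open>y\<close> and below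
  the strict up-set of \<open>x\<close>, and \<open>y'\<close> placed above the strict down-set of \<open>y\<close>, below the
  up-set of \<open>x\<close>, and below \<open>x'\<close>.\<close>

definition unzip_covers :: "('a \<times> 'a) set" where
  "unzip_covers = (cover_pairs P - {(y, x)})
     \<union> {(x', w) | w. (x, w) \<in> cover_pairs P}
     \<union> {(w, y') | w. (w, y) \<in> cover_pairs P}
     \<union> {(y', x'), (y, x'), (y', x)}"

definition unzip_less :: "('a \<times> 'a) set" where
  "unzip_less = {(a,c). (a,c) \<in> snd P \<and> a \<noteq> c \<and> (a,c) \<noteq> (y,x)}
     \<union> {(x',c) | c. (x,c) \<in> snd P \<and> c \<noteq> x} \<union> {(a,x') | a. (a,y) \<in> snd P}
     \<union> {(y',c) | c. (x,c) \<in> snd P} \<union> {(a,y') | a. (a,y) \<in> snd P \<and> a \<noteq> y} \<union> {(y',x')}"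

lemma unzip_unfold:
  "unzipped = (fst P \<union> {x',y'}, Id_on (fst P \<union> {x',y'}) \<union> unzip_covers\<^sup>+)"
  unfolding unzip_def unzip_covers_def Let_def by simp

lemma unzip_less_iff: "(a,c) \<in> unzip_less \<longleftrightarrow>
    ((a,c) \<in> snd P \<and> a \<noteq> c \<and> (a,c) \<noteq> (y,x)) \<or> (a = x' \<and> (x,c) \<in> snd P \<and> c \<noteq> x)
  \<or> (c = x' \<and> (a,y) \<in> snd P) \<or> (a = y' \<and> (x,c) \<in> snd P)
  \<or> (c = y' \<and> (a,y) \<in> snd P \<and> a \<noteq> y) \<or> (a = y' \<and> c = x')"
  unfolding unzip_less_def by blast

lemma unzip_less_trans: "trans unzip_less"
proof (rule transI)
  fix a b c assume ab: "(a,b) \<in> unzip_less" and bc: "(b,c) \<in> unzip_less"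
  note T = poset_le_trans[OF poset] and A = poset_le_antisym[OF poset]
  have not_in_P: "(x',u) \<notin> snd P" "(u,x') \<notin> snd P" "(y',u) \<notin> snd P" "(u,y') \<notin> snd P" for u
    using poset_le_carrier[OF poset] fresh by blast+
  show "(a,c) \<in> unzip_less"
    using ab bc unfolding unzip_less_iff
    by (elim disjE conjE; simp add: not_in_P fresh(3) fresh(3)[symmetric];
        metis T A cover_elements(3,4,6))
qed

text \<open>The generating covers are intended relations, so by transitivity the transitive closure
  of the generating covers is contained in the intended order \<dots>\<close>

lemma unzip_covers_subset: "unzip_covers \<subseteq> unzip_less"
  unfolding unzip_covers_def unzip_less_def cover_pairs_def covers_def
  using cover_elements poset_le_refl[OF poset] by auto

lemma trancl_cover_pairs_in_unzip:
  assumes "(a,c) \<in> (cover_pairs P)\<^sup>+"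
  shows "((a,c) \<noteq> (y,x) \<longrightarrow> (a,c) \<in> unzip_covers\<^sup>+) \<and> (c = y \<longrightarrow> (a,y') \<in> unzip_covers\<^sup>+)"
  using assms
proof (induction rule: trancl_induct)
  case (base c)
  then show ?case unfolding unzip_covers_def by auto
next
  case (step b c)
  have bc: "(b,c) \<in> snd P" "b \<noteq> c" using cover_pairs_less[OF step(2)] by auto
  show ?case
  proof (intro conjI impI)
    assume "(a,c) \<noteq> (y,x)"
    show "(a,c) \<in> unzip_covers\<^sup>+"
    proof (cases "(b,c) = (y,x)")
      case True
      \<comment> \<open>the removed cover \<open>y < x\<close> is bypassed through \<open>y'\<close>\<close>
      moreover have "(a,y') \<in> unzip_covers\<^sup>+" using True step.IH by auto
      moreover have "(y',x) \<in> unzip_covers" unfolding unzip_covers_def by auto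
      ultimately show ?thesis by (metis trancl.trancl_into_trancl prod.inject)
    next
      case False
      then have bc_cover: "(b,c) \<in> unzip_covers" using step(2) unfolding unzip_covers_def by auto
      show ?thesis
      proof (cases "(a,b) = (y,x)")
        case True
        \<comment> \<open>the removed cover \<open>y < x\<close> is bypassed through \<open>x'\<close>\<close>
        have "(y,x') \<in> unzip_covers" "(x',c) \<in> unzip_covers"
          using step(2) True unfolding unzip_covers_def by auto
        then show ?thesis using True by auto
      next
        case False
        then show ?thesis using step.IH bc_cover by auto
      qed
    qed
  next
    assume "c = y"
    then have "b \<noteq> x"
      using bc cover_elements poset_le_antisym[OF poset] poset_le_trans[OF poset] by metis
    then have "(a,b) \<in> unzip_covers\<^sup>+" using step.IH by auto
    moreover have "(b,y') \<in> unzip_covers" using step(2) \<open>c = y\<close> unfolding unzip_covers_def by auto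
    ultimately show "(a,y') \<in> unzip_covers\<^sup>+" by auto
  qed
qed

lemma unzip_less_subset: "unzip_less \<subseteq> unzip_covers\<^sup>+"
proof (rule subrelI)
  fix a c assume ac: "(a,c) \<in> unzip_less"
  note to_trancl = less_trancl_cover_pairs[OF finite poset]
  have new: "(y,x') \<in> unzip_covers" "(y',x') \<in> unzip_covers" "(y',x) \<in> unzip_covers"
    unfolding unzip_covers_def by auto
  have below_y': "(a,y') \<in> unzip_covers\<^sup>+" if "(a,y) \<in> snd P" "a \<noteq> y" for a
    using trancl_cover_pairs_in_unzip[OF to_trancl[OF that]] by auto
  have above_x: "(x,c) \<in> unzip_covers\<^sup>+" if "(x,c) \<in> snd P" "c \<noteq> x" for c
    using trancl_cover_pairs_in_unzip[OF to_trancl[OF that(1)]] that cover_elements by auto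
  have above_x': "(x',c) \<in> unzip_covers\<^sup>+" if x_c: "(x,c) \<in> snd P" "c \<noteq> x" for c
  proof -
    obtain d where xd: "(x,d) \<in> cover_pairs P" and dc: "(d,c) \<in> (cover_pairs P)\<^sup>*"
      using tranclD[OF to_trancl[OF x_c(1)]] x_c(2) by blast
    have "(x',d) \<in> unzip_covers" using xd unfolding unzip_covers_def by auto
    moreover have "d = c \<or> (d,c) \<in> unzip_covers\<^sup>+"
    proof (cases "d = c")
      case False
      then have "(d,c) \<in> (cover_pairs P)\<^sup>+" using dc by (meson rtranclD)
      moreover have "d \<noteq> y"
        using cover_pairs_less[OF xd] cover_elements poset_le_antisym[OF poset] by metis
      ultimately show ?thesis using trancl_cover_pairs_in_unzip by auto
    qed simp
    ultimately show ?thesis by auto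
  qed
  show "(a,c) \<in> unzip_covers\<^sup>+"
    using ac unfolding unzip_less_iff
  proof (elim disjE conjE)
    assume "(a,c) \<in> snd P" "a \<noteq> c" "(a,c) \<noteq> (y,x)"
    then show ?thesis using trancl_cover_pairs_in_unzip[OF to_trancl] by blast
  next
    assume "a = x'" "(x,c) \<in> snd P" "c \<noteq> x"
    then show ?thesis using above_x' by simp
  next
    assume "c = x'" "(a,y) \<in> snd P"
    then show ?thesis using below_y' new by (cases "a = y") (auto intro: trancl_into_trancl)
  next
    assume "a = y'" "(x,c) \<in> snd P"
    then show ?thesis using above_x new by (cases "c = x") (auto intro: trancl_into_trancl2)
  next
    assume "c = y'" "(a,y) \<in> snd P" "a \<noteq> y"
    then show ?thesis using below_y' by simp
  next
    assume "a = y'" "c = x'"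
    then show ?thesis using new by auto
  qed
qed

lemma unzip_order: "snd unzipped = Id_on (fst P \<union> {x',y'}) \<union> unzip_less"
proof -
  have "unzip_covers\<^sup>+ \<subseteq> unzip_less"
    using unzip_covers_subset unzip_less_trans by (metis trancl_id trancl_mono subrelI)
  then show ?thesis
    unfolding unzip_unfold using unzip_less_subset by auto
qed

lemma unzip_le_old:
  assumes "a \<in> fst P" "c \<in> fst P"
  shows "(a,c) \<in> snd unzipped \<longleftrightarrow> (a,c) \<in> snd P \<and> (a,c) \<noteq> (y,x)"
  using assms fresh cover_elements(4) poset_le_refl[OF poset]
  by (auto simp: unzip_order unzip_less_iff)

lemma unzip_y'_le:
  assumes "c \<in> fst P"
  shows "(y',c) \<in> snd unzipped \<longleftrightarrow> (x,c) \<in> snd P"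
  using assms fresh poset_le_carrier[OF poset] by (auto simp: unzip_order unzip_less_iff)

theorem zip_unzip: "zip_poset unzipped x' y' y = P"
proof -
  have carrier: "fst unzipped - {x',y'} = fst P"
    using fresh unfolding unzip_unfold by auto
  have le_iff: "(a,c) \<in> snd P \<longleftrightarrow> a \<in> fst P \<and> c \<in> fst P \<and>
      ((a,c) \<in> snd unzipped \<or> (a = y \<and> (y',c) \<in> snd unzipped \<and> c \<noteq> y'))" for a c
  proof
    assume ac: "(a,c) \<in> snd P"
    then have "a \<in> fst P" "c \<in> fst P" using poset_le_carrier[OF poset] by auto
    moreover have "(a,c) \<in> snd unzipped \<or> (a = y \<and> (y',c) \<in> snd unzipped \<and> c \<noteq> y')"
    proof (cases "(a,c) = (y,x)")
      case True
      \<comment> \<open>the deleted relation \<open>y < x\<close> is restored by zipping, as \<open>y' < x\<close>\<close>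
      then show ?thesis
        using unzip_y'_le cover_elements(1) poset_le_refl[OF poset] fresh(2) by auto
    qed (use unzip_le_old \<open>a \<in> fst P\<close> \<open>c \<in> fst P\<close> ac in blast)
    ultimately show "a \<in> fst P \<and> c \<in> fst P \<and>
      ((a,c) \<in> snd unzipped \<or> (a = y \<and> (y',c) \<in> snd unzipped \<and> c \<noteq> y'))" by blast
  next
    assume "a \<in> fst P \<and> c \<in> fst P \<and>
      ((a,c) \<in> snd unzipped \<or> (a = y \<and> (y',c) \<in> snd unzipped \<and> c \<noteq> y'))"
    then show "(a,c) \<in> snd P"
      using unzip_le_old unzip_y'_le poset_le_trans[OF poset cover_elements(3)] by blast
  qed
  show ?thesis
    unfolding zip_poset_def carrier
    by (simp add: prod_eq_iff set_eq_iff le_iff split_paired_all)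
qed

lemma unzip_comparable_old:
  assumes "u \<in> fst P" "v \<in> fst P"
  shows "comparable (snd unzipped) u v \<longleftrightarrow>
    comparable (snd P) u v \<and> \<not> (u = x \<and> v = y) \<and> \<not> (u = y \<and> v = x)"
  using unzip_le_old[OF assms] unzip_le_old[OF assms(2,1)] cover_elements(5)
  unfolding comparable_def by auto

lemma comparable_x_and_y:
  "comparable (snd P) x v \<and> comparable (snd P) y v \<longleftrightarrow> (v,y) \<in> snd P \<or> (x,v) \<in> snd P"
  using cover_elements(3,6) poset_le_trans[OF poset] unfolding comparable_def by blast

lemma unzip_comparable_x':
  assumes "v \<in> fst P"
  shows "comparable (snd unzipped) x' v \<longleftrightarrow>
    v \<noteq> x \<and> comparable (snd P) x v \<and> comparable (snd P) y v"
proof -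
  have "comparable (snd unzipped) x' v \<longleftrightarrow> (v,y) \<in> snd P \<or> ((x,v) \<in> snd P \<and> v \<noteq> x)"
    using assms fresh poset_le_carrier[OF poset]
    unfolding comparable_def by (auto simp: unzip_order unzip_less_iff)
  also have "\<dots> \<longleftrightarrow> v \<noteq> x \<and> comparable (snd P) x v \<and> comparable (snd P) y v"
    using comparable_x_and_y cover_elements(5) by blast
  finally show ?thesis .
qed

lemma unzip_comparable_y':
  assumes "v \<in> fst P"
  shows "comparable (snd unzipped) y' v \<longleftrightarrow>
    v \<noteq> y \<and> comparable (snd P) x v \<and> comparable (snd P) y v"
proof -
  have "comparable (snd unzipped) y' v \<longleftrightarrow> ((v,y) \<in> snd P \<and> v \<noteq> y) \<or> (x,v) \<in> snd P"
    using assms fresh poset_le_carrier[OF poset]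
    unfolding comparable_def by (auto simp: unzip_order unzip_less_iff)
  also have "\<dots> \<longleftrightarrow> v \<noteq> y \<and> comparable (snd P) x v \<and> comparable (snd P) y v"
    using comparable_x_and_y cover_elements(5) by blast
  finally show ?thesis .
qed

lemma unzip_comparable_new: "comparable (snd unzipped) x' y'"
  "(x',x') \<in> snd unzipped" "(y',y') \<in> snd unzipped"
  unfolding comparable_def by (auto simp: unzip_order unzip_less_iff)

lemma order_complex_unzipped:
  "F \<in> order_complex unzipped bt tp \<longleftrightarrow>
     F \<subseteq> fst P \<union> {x',y'} - {bt,tp} \<and> is_chain_in (snd unzipped) F"
  unfolding order_complex_iff by (simp add: unzip_unfold)

lemma link_order_complex:
  assumes "x \<notin> {bt,tp}" "y \<notin> {bt,tp}"
  shows "G \<in> link (order_complex P bt tp) {x,y} \<longleftrightarrow> G \<subseteq> fst P - {bt,tp,x,y} \<and>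
    is_chain_in (snd P) G \<and> (\<forall>v\<in>G. comparable (snd P) x v \<and> comparable (snd P) y v)"
  using assms cover_elements poset_le_refl[OF poset]
  unfolding link_def order_complex_iff is_chain_in_def comparable_def by auto

lemma unzip_chain_is_subdivision_face:
  assumes xy: "x \<notin> {bt,tp}" "y \<notin> {bt,tp}"
    and F_sub: "F \<subseteq> fst P \<union> {x',y'} - {bt,tp}" and F_chain: "is_chain_in (snd unzipped) F"
  shows "(F \<in> order_complex P bt tp \<and> \<not> {x,y} \<subseteq> F) \<or>
    (\<exists>G\<in>link (order_complex P bt tp) {x,y}. F = G \<union> {x'} \<or> F = G \<union> {y,x'} \<or>
      F = G \<union> {y'} \<or> F = G \<union> {x,y'} \<or> F = G \<union> {x',y'})"
proof -
  let ?L = "link (order_complex P bt tp) {x,y}"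
  have comp: "comparable (snd unzipped) u v" if "u \<in> F" "v \<in> F" for u v
    using F_chain that unfolding is_chain_in_def by blast
  have comp_P: "comparable (snd P) u v" if "u \<in> F" "v \<in> F" "u \<in> fst P" "v \<in> fst P" for u v
    using comp[OF that(1,2)] unzip_comparable_old[OF that(3,4)] by blast
  have not_xy: "\<not> {x,y} \<subseteq> F"
    using comp[of x y] unzip_comparable_old[OF cover_elements(1,2)] by blast
  have not_x'x: "\<not> {x',x} \<subseteq> F"
    using comp[of x' x] unzip_comparable_x'[OF cover_elements(1)] by blast
  have not_y'y: "\<not> {y',y} \<subseteq> F"
    using comp[of y' y] unzip_comparable_y'[OF cover_elements(2)] by blast
  have comp_xy: "comparable (snd P) x v \<and> comparable (snd P) y v"
    if "x' \<in> F \<or> y' \<in> F" "v \<in> F" "v \<in> fst P" for v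
    using that comp unzip_comparable_x' unzip_comparable_y' by blast
  have in_link: "F - {x',y',x,y} \<in> ?L" if "x' \<in> F \<or> y' \<in> F"
    unfolding link_order_complex[OF xy] is_chain_in_def
    using F_sub comp_P comp_xy[OF that] by blast
  show ?thesis
  proof (cases "x' \<in> F \<or> y' \<in> F")
    case True
    then have "F = (F - {x',y',x,y}) \<union> {x'} \<or> F = (F - {x',y',x,y}) \<union> {y,x'} \<or>
      F = (F - {x',y',x,y}) \<union> {y'} \<or> F = (F - {x',y',x,y}) \<union> {x,y'} \<or>
      F = (F - {x',y',x,y}) \<union> {x',y'}"
      using not_xy not_x'x not_y'y by blast
    then show ?thesis using in_link[OF True] by blast
  next
    case False
    then have "F \<in> order_complex P bt tp"
      using F_sub comp_P unfolding order_complex_iff is_chain_in_def by blast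
    then show ?thesis using not_xy by blast
  qed
qed

lemma subdivision_face_is_unzip_chain:
  assumes xy: "x \<notin> {bt,tp}" "y \<notin> {bt,tp}" and bounds: "bt \<in> fst P" "tp \<in> fst P"
    and G: "G \<in> link (order_complex P bt tp) {x,y}"
    and F: "F = G \<union> {x'} \<or> F = G \<union> {y,x'} \<or> F = G \<union> {y'} \<or> F = G \<union> {x,y'} \<or> F = G \<union> {x',y'}"
  shows "F \<subseteq> fst P \<union> {x',y'} - {bt,tp} \<and> is_chain_in (snd unzipped) F"
proof
  have G_sub: "G \<subseteq> fst P - {bt,tp,x,y}" and G_chain: "is_chain_in (snd P) G"
    and G_xy: "\<And>v. v \<in> G \<Longrightarrow> comparable (snd P) x v \<and> comparable (snd P) y v"
    using G unfolding link_order_complex[OF xy] by blast+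
  obtain S where F_eq: "F = G \<union> S" and S: "S = {x'} \<or> S = {y,x'} \<or> S = {y'} \<or> S = {x,y'} \<or> S = {x',y'}"
    using F by blast
  show "F \<subseteq> fst P \<union> {x',y'} - {bt,tp}"
    using F G_sub xy bounds fresh cover_elements(1,2) by blast
  have G_chain': "is_chain_in (snd unzipped) G"
    using G_sub G_chain unzip_comparable_old unfolding is_chain_in_def by blast
  have S_G: "comparable (snd unzipped) a v" if "a \<in> S" "v \<in> G" for a v
  proof -
    have "v \<in> fst P" "v \<noteq> x" "v \<noteq> y" "comparable (snd P) x v" "comparable (snd P) y v"
      using G_sub G_xy \<open>v \<in> G\<close> by blast+
    moreover have "a = x \<or> a = y \<or> a = x' \<or> a = y'" using S \<open>a \<in> S\<close> by blast
    ultimately show ?thesis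
      using unzip_comparable_old unzip_comparable_x' unzip_comparable_y' cover_elements(1,2)
      by blast
  qed
  have S_chain: "is_chain_in (snd unzipped) S"
  proof -
    have "comparable (snd unzipped) x' y" "comparable (snd unzipped) y' x"
      using unzip_comparable_x'[OF cover_elements(2)] unzip_comparable_y'[OF cover_elements(1)]
        cover_elements(1-4) poset_le_refl[OF poset] unfolding comparable_def by auto
    moreover have "(x,x) \<in> snd unzipped" "(y,y) \<in> snd unzipped"
      using unzip_le_old cover_elements(1,2,4) poset_le_refl[OF poset] by blast+
    ultimately show ?thesis
      using S unzip_comparable_new comparable_sym
      unfolding is_chain_in_def comparable_def by auto
  qed
  show "is_chain_in (snd unzipped) F"
    unfolding F_eq using G_chain' S_chain S_G by (rule is_chain_in_Un)
qed

theorem order_complex_unzip: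
  assumes xy: "x \<notin> {bt,tp}" "y \<notin> {bt,tp}" and bounds: "bt \<in> fst P" "tp \<in> fst P"
  shows "order_complex unzipped bt tp =
    edge_subdiv (edge_subdiv (order_complex P bt tp) x y x') x x' y'"
proof (rule set_eqI)
  fix F
  have old_face: "F \<subseteq> fst P \<union> {x',y'} - {bt,tp} \<and> is_chain_in (snd unzipped) F"
    if "F \<in> order_complex P bt tp" "\<not> {x,y} \<subseteq> F"
    using that unzip_comparable_old unfolding order_complex_iff is_chain_in_def by blast
  have subdiv: "F \<in> edge_subdiv (edge_subdiv (order_complex P bt tp) x y x') x x' y' \<longleftrightarrow>
    (F \<in> order_complex P bt tp \<and> \<not> {x,y} \<subseteq> F) \<or>
      (\<exists>G\<in>link (order_complex P bt tp) {x,y}. F = G \<union> {x'} \<or> F = G \<union> {y,x'} \<or>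
        F = G \<union> {y'} \<or> F = G \<union> {x,y'} \<or> F = G \<union> {x',y'})"
    by (rule edge_subdiv_twice[OF order_complex_faces cover_elements(1,2,4) fresh(1)])
  show "F \<in> order_complex unzipped bt tp \<longleftrightarrow>
    F \<in> edge_subdiv (edge_subdiv (order_complex P bt tp) x y x') x x' y'"
    unfolding order_complex_unzipped subdiv
  proof
    assume "F \<subseteq> fst P \<union> {x',y'} - {bt,tp} \<and> is_chain_in (snd unzipped) F"
    then show "(F \<in> order_complex P bt tp \<and> \<not> {x,y} \<subseteq> F) \<or>
      (\<exists>G\<in>link (order_complex P bt tp) {x,y}. F = G \<union> {x'} \<or> F = G \<union> {y,x'} \<or>
        F = G \<union> {y'} \<or> F = G \<union> {x,y'} \<or> F = G \<union> {x',y'})"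
      by (elim conjE) (rule unzip_chain_is_subdivision_face[OF xy])
  next
    assume "(F \<in> order_complex P bt tp \<and> \<not> {x,y} \<subseteq> F) \<or>
      (\<exists>G\<in>link (order_complex P bt tp) {x,y}. F = G \<union> {x'} \<or> F = G \<union> {y,x'} \<or>
        F = G \<union> {y'} \<or> F = G \<union> {x,y'} \<or> F = G \<union> {x',y'})"
    then show "F \<subseteq> fst P \<union> {x',y'} - {bt,tp} \<and> is_chain_in (snd unzipped) F"
    proof
      assume "F \<in> order_complex P bt tp \<and> \<not> {x,y} \<subseteq> F"
      then show ?thesis using old_face by blast
    next
      assume "\<exists>G\<in>link (order_complex P bt tp) {x,y}. F = G \<union> {x'} \<or> F = G \<union> {y,x'} \<or>
        F = G \<union> {y'} \<or> F = G \<union> {x,y'} \<or> F = G \<union> {x',y'}"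
      then obtain G where "G \<in> link (order_complex P bt tp) {x,y}" and "F = G \<union> {x'} \<or>
        F = G \<union> {y,x'} \<or> F = G \<union> {y'} \<or> F = G \<union> {x,y'} \<or> F = G \<union> {x',y'}"
        by blast
      then show ?thesis by (rule subdivision_face_is_unzip_chain[OF xy bounds])
    qed
  qed
qed

end

theorem proposition2p4:
  fixes P :: "'a poset" and bt tp :: 'a
  assumes "graded_bounded_poset P bt tp"
  shows
   "(\<forall>x y x' y'. x \<in> fst P - {bt, tp} \<longrightarrow> y \<in> fst P - {bt, tp} \<longrightarrow> covers P x y \<longrightarrow>
        x' \<notin> fst P \<longrightarrow> y' \<notin> fst P \<longrightarrow> x' \<noteq> y' \<longrightarrow>
        zip_poset (unzip P x y x' y') x' y' y = P)
    \<and> (\<forall>x y z. x \<in> fst P - {bt, tp} \<longrightarrow> y \<in> fst P - {bt, tp} \<longrightarrow> z \<in> fst P - {bt, tp} \<longrightarrow>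
        zip_hyp P x y z \<longrightarrow>
        order_complex (zip_poset P x y z) bt tp
          = edge_contract (edge_contract (order_complex P bt tp) y x) x z)
    \<and> (\<forall>x y x' y'. x \<in> fst P - {bt, tp} \<longrightarrow> y \<in> fst P - {bt, tp} \<longrightarrow> covers P x y \<longrightarrow>
        x' \<notin> fst P \<longrightarrow> y' \<notin> fst P \<longrightarrow> x' \<noteq> y' \<longrightarrow>
        order_complex (unzip P x y x' y') bt tp
          = edge_subdiv (edge_subdiv (order_complex P bt tp) x y x') x x' y')"
proof -
  have poset: "is_poset P" and finite: "finite (fst P)" and bounds: "bt \<in> fst P" "tp \<in> fst P"
    using assms unfolding graded_bounded_poset_def by auto
  have unzip: "unzip_setting P x y x' y'"
    if "covers P x y" "x' \<notin> fst P" "y' \<notin> fst P" "x' \<noteq> y'" for x y x' y'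
    using poset finite that by (rule unzip_setting.intro)
  have zip: "zip_setting P x y z" if "zip_hyp P x y z" for x y z
    using poset finite that by (rule zip_setting.intro)
  show ?thesis
  proof (intro conjI allI impI)
    fix x y x' y'
    assume "covers P x y" "x' \<notin> fst P" "y' \<notin> fst P" "x' \<noteq> y'"
    then show "zip_poset (unzip P x y x' y') x' y' y = P"
      by (rule unzip_setting.zip_unzip[OF unzip])
  next
    fix x y z
    assume "x \<in> fst P - {bt, tp}" "y \<in> fst P - {bt, tp}" "z \<in> fst P - {bt, tp}" "zip_hyp P x y z"
    then show "order_complex (zip_poset P x y z) bt tp
      = edge_contract (edge_contract (order_complex P bt tp) y x) x z"
      using zip_setting.order_complex_zip_poset[OF zip] by blast
  next
    fix x y x' y'
    assume "x \<in> fst P - {bt, tp}" "y \<in> fst P - {bt, tp}"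
      and "covers P x y" "x' \<notin> fst P" "y' \<notin> fst P" "x' \<noteq> y'"
    then show "order_complex (unzip P x y x' y') bt tp
      = edge_subdiv (edge_subdiv (order_complex P bt tp) x y x') x x' y'"
      using unzip_setting.order_complex_unzip[OF unzip] bounds by blast
  qed
qed

end
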